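(* Let $(V,\langle\cdot,\cdot\rangle)$ be an $n$-dimensional real inner product space and $S: V\times V\to\mathbb{R}$ a symmetric bilinear form. Let $W\subset V$ be an $(n-1)$-dimensional subspace and $\nu\in W^\perp$ a unit vector. Fix $1\le m\le n-1$. Then the restriction $S|_W$ is $m$-positive if and only if $S \mathbin{\bigcirc\!\!\!\!\wedge} (\nu^\flat\otimes\nu^\flat)$ lies in the interior of the cone $\mathcal{C}_m(V)$.
   Context: Here $\mathbin{\bigcirc\!\!\!\!\wedge}$ denotes the Kulkarni--Nomizu product, $(S\mathbin{\bigcirc\!\!\!\!\wedge} T)(v_1,v_2,v_3,v_4)=S(v_1,v_3)T(v_2,v_4)+S(v_2,v_4)T(v_1,v_3)-S(v_1,v_4)T(v_2,v_3)-S(v_2,v_3)T(v_1,v_4)$, and $\nu^\flat=\langle\nu,\cdot\rangle$. The cone $\mathcal{C}_m(V)$ consists of algebraic curvature tensors $T$ (4-linear, antisymmetric in the first two slots, pair-symmetric, satisfying the first Bianchi identity) with $\sum_{p=1}^m\sum_{q=p+1}^n T(e_p,e_q,e_p,e_q)\ge 0$ for every orthonormal basis $\{e_i\}$ of $V$. A symmetric bilinear form on $W$ with eigenvalues $\lambda_1\le\dots\le\lambda_{n-1}$ is $m$-positive if $\lambda_1+\dots+\lambda_m>0$. *)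

theory Defs
  imports "HOL-Analysis.Analysis"
begin

type_synonym 'a tensor4 = "'a \<Rightarrow> 'a \<Rightarrow> 'a \<Rightarrow> 'a \<Rightarrow> real"

definition sym_bilinear :: "('a::real_vector \<Rightarrow> 'a \<Rightarrow> real) \<Rightarrow> bool" where
  "sym_bilinear S \<longleftrightarrow> bilinear S \<and> (\<forall>x y. S x y = S y x)"

definition KN :: "('a \<Rightarrow> 'a \<Rightarrow> real) \<Rightarrow> ('a \<Rightarrow> 'a \<Rightarrow> real) \<Rightarrow> 'a tensor4" where
  "KN S T = (\<lambda>v1 v2 v3 v4. S v1 v3 * T v2 v4 + S v2 v4 * T v1 v3
                          - S v1 v4 * T v2 v3 - S v2 v3 * T v1 v4)"

definition flat_sq :: "'a::real_inner \<Rightarrow> 'a \<Rightarrow> 'a \<Rightarrow> real" where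
  "flat_sq \<nu> = (\<lambda>x y. inner \<nu> x * inner \<nu> y)"

definition multilinear4 :: "'a::real_vector tensor4 \<Rightarrow> bool" where
  "multilinear4 T \<longleftrightarrow>
     (\<forall>b c d. linear (\<lambda>a. T a b c d)) \<and> (\<forall>a c d. linear (\<lambda>b. T a b c d)) \<and>
     (\<forall>a b d. linear (\<lambda>c. T a b c d)) \<and> (\<forall>a b c. linear (\<lambda>d. T a b c d))"

definition alg_curv :: "'a::real_vector tensor4 set" where
  "alg_curv = {T. multilinear4 T
      \<and> (\<forall>a b c d. T a b c d = - T b a c d)
      \<and> (\<forall>a b c d. T a b c d = T c d a b)
      \<and> (\<forall>a b c d. T a b c d + T b c a d + T c a b d = 0)}"

definition orthonormal_frame :: "nat \<Rightarrow> (nat \<Rightarrow> 'a::real_inner) \<Rightarrow> bool" where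
  "orthonormal_frame k e \<longleftrightarrow> (\<forall>i<k. \<forall>j<k. inner (e i) (e j) = (if i = j then 1 else 0))"

text \<open>The cone C_m(V) (indices shifted to start at 0).\<close>
definition cone_C :: "nat \<Rightarrow> ('a::euclidean_space) tensor4 set" where
  "cone_C m = {T \<in> alg_curv. \<forall>e. orthonormal_frame DIM('a) e \<longrightarrow>
      (\<Sum>p<m. \<Sum>q\<in>{p+1..<DIM('a)}. T (e p) (e q) (e p) (e q)) \<ge> 0}"

text \<open>lam is the (increasingly ordered) list of eigenvalues of the symmetric form S
  restricted to W, with respect to the inner product: there is an orthonormal basis
  e_0..e_{k-1} of W (k = dim W) diagonalising S with S(e_i,e_i) = lam_i.\<close>
definition eigenvalues_on :: "('a::euclidean_space \<Rightarrow> 'a \<Rightarrow> real) \<Rightarrow> 'a set \<Rightarrow> (nat \<Rightarrow> real) \<Rightarrow> bool" where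
  "eigenvalues_on S W lam \<longleftrightarrow>
     (\<forall>i j. i \<le> j \<longrightarrow> j < dim W \<longrightarrow> lam i \<le> lam j) \<and>
     (\<exists>e. orthonormal_frame (dim W) e \<and> (\<forall>i<dim W. e i \<in> W) \<and> span (e ` {..<dim W}) = W \<and>
          (\<forall>i<dim W. \<forall>j<dim W. S (e i) (e j) = (if i = j then lam i else 0)))"

text \<open>m-positivity of S restricted to W: sum of the m smallest eigenvalues is positive.\<close>
definition m_positive_on :: "nat \<Rightarrow> ('a::euclidean_space \<Rightarrow> 'a \<Rightarrow> real) \<Rightarrow> 'a set \<Rightarrow> bool" where
  "m_positive_on m S W \<longleftrightarrow> (\<exists>lam. eigenvalues_on S W lam \<and> (\<Sum>i<m. lam i) > 0)"

end

theory Submission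
  imports Defs
begin

(*
  For x, y in V, (S o nu-flat (x) nu-flat)(x, y, x, y) = S(w, w) with w = <nu, y> x - <nu, x> y,
  a vector of W.  In an orthonormal eigenbasis of S restricted to W, completed by nu, the cone
  sum of this tensor is lambda_1 + ... + lambda_m.  In an arbitrary orthonormal basis it is
  sum_i lambda_i a_i with weights 0 <= a_i <= 1 (Lagrange's identity) of total mass at least m,
  hence it is at least lambda_1 + ... + lambda_m as soon as this is nonnegative.  A uniform
  positive lower bound on the cone sums persists in a neighbourhood, which gives an interior
  point.  Conversely an interior point stays in the cone after subtracting a small multiple of
  <,> o <,>, whose cone sums are positive, so all its cone sums are positive.
*)

section \<open>Orthonormal frames\<close>

lemma orthonormal_frameD:
  "orthonormal_frame k e \<Longrightarrow> i < k \<Longrightarrow> j < k \<Longrightarrow> e i \<bullet> e j = (if i = j then 1 else 0)"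
  unfolding orthonormal_frame_def by blast

lemma orthonormal_frame_norm: "orthonormal_frame k e \<Longrightarrow> i < k \<Longrightarrow> norm (e i) = 1"
  using orthonormal_frameD[of k e i i] by (simp add: norm_eq_1)

lemma orthonormal_frame_expansion:
  assumes e: "orthonormal_frame k e" and x: "x \<in> span (e ` {..<k})"
  shows "x = (\<Sum>i<k. (x \<bullet> e i) *\<^sub>R e i)"
  using x
proof (induction rule: span_induct_alt)
  case base
  then show ?case by simp
next
  case (step c x y)
  then obtain j where j: "j < k" "x = e j" by auto
  have "(\<Sum>i<k. (e j \<bullet> e i) *\<^sub>R e i) = (\<Sum>i<k. if i = j then e j else 0)"
    by (rule sum.cong) (auto simp: orthonormal_frameD[OF e] j(1))
  then have "(\<Sum>i<k. (x \<bullet> e i) *\<^sub>R e i) = x"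
    using j by (simp add: sum.delta')
  moreover have "(\<Sum>i<k. ((c *\<^sub>R x + y) \<bullet> e i) *\<^sub>R e i)
      = c *\<^sub>R (\<Sum>i<k. (x \<bullet> e i) *\<^sub>R e i) + (\<Sum>i<k. (y \<bullet> e i) *\<^sub>R e i)"
    by (simp add: inner_add_left scaleR_add_left sum.distrib scaleR_sum_right)
  ultimately show ?case
    using step.IH by simp
qed

lemma orthonormal_frame_inner_expansion:
  assumes "orthonormal_frame k e" "x \<in> span (e ` {..<k})"
  shows "x \<bullet> y = (\<Sum>i<k. (x \<bullet> e i) * (y \<bullet> e i))"
proof -
  have "x \<bullet> y = (\<Sum>i<k. (x \<bullet> e i) *\<^sub>R e i) \<bullet> y"
    using orthonormal_frame_expansion[OF assms] by simp
  then show ?thesis by (simp add: inner_sum_left inner_commute[of y])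
qed

lemma orthonormal_frame_span_eq:
  fixes e :: "nat \<Rightarrow> 'a::euclidean_space"
  assumes e: "orthonormal_frame k e" and U: "subspace U" "dim U = k" and eU: "\<forall>i<k. e i \<in> U"
  shows "span (e ` {..<k}) = U"
proof -
  have "inj_on e {..<k}"
    by (rule inj_onI) (metis e orthonormal_frameD lessThan_iff zero_neq_one)
  then have card: "card (e ` {..<k}) = dim U"
    using U(2) by (simp add: card_image)
  have "independent (e ` {..<k})"
    by (rule pairwise_orthogonal_independent)
       (auto simp: pairwise_def orthogonal_def dest: orthonormal_frameD[OF e]
             orthonormal_frame_norm[OF e])
  then have "U \<subseteq> span (e ` {..<k})"
    using card_eq_dim[of "e ` {..<k}" U] card eU by auto
  moreover have "span (e ` {..<k}) \<subseteq> U"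
    using eU U(1) by (intro span_minimal) auto
  ultimately show ?thesis by blast
qed

lemma in_span_orthonormal_frame:
  fixes e :: "nat \<Rightarrow> 'a::euclidean_space"
  assumes "orthonormal_frame DIM('a) e"
  shows "x \<in> span (e ` {..<DIM('a)})"
  using orthonormal_frame_span_eq[OF assms subspace_UNIV] by simp

lemma orthonormal_frame_snoc:
  assumes f: "orthonormal_frame k f" and \<nu>: "\<forall>i<k. \<nu> \<bullet> f i = 0" "norm \<nu> = 1"
  shows "orthonormal_frame (Suc k) (\<lambda>i. if i < k then f i else \<nu>)"
  using orthonormal_frameD[OF f] \<nu>
  by (auto simp: orthonormal_frame_def inner_commute norm_eq_1 less_Suc_eq)

lemma hyperplane_eq_if_orthogonal:
  fixes \<nu> :: "'a::euclidean_space"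
  assumes "subspace W" "dim W = DIM('a) - 1" "\<forall>w\<in>W. \<nu> \<bullet> w = 0" "\<nu> \<noteq> 0"
  shows "W = {x. \<nu> \<bullet> x = 0}"
  using assms by (intro subspace_dim_equal) (auto simp: dim_hyperplane subspace_hyperplane)

section \<open>Diagonalising a symmetric bilinear form\<close>

lemma linear_coeff_eq_0_if_quadratic_nonneg:
  fixes a b :: real
  assumes "\<And>t. 0 \<le> 2 * t * a + t\<^sup>2 * b"
  shows "a = 0"
proof (rule ccontr)
  assume "a \<noteq> 0"
  define B where "B = \<bar>b\<bar> + 1"
  have "B > 0" "b - 2 * B < 0" unfolding B_def by auto
  have "2 * (- a / B) * a + (- a / B)\<^sup>2 * b = a\<^sup>2 * (b - 2 * B) / B\<^sup>2"
    using \<open>B > 0\<close> by (simp add: field_simps power2_eq_square)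
  also have "\<dots> < 0"
    using \<open>a \<noteq> 0\<close> \<open>B > 0\<close> \<open>b - 2 * B < 0\<close> by (simp add: divide_neg_pos mult_pos_neg)
  finally show False using assms[of "- a / B"] by simp
qed

lemma bilinear_ge_min_on_sphere:
  fixes S :: "'a::real_inner \<Rightarrow> 'a \<Rightarrow> real"
  assumes S: "bilinear S" and U: "subspace U" and min: "\<forall>x\<in>U. norm x = 1 \<longrightarrow> c \<le> S x x"
    and x: "x \<in> U"
  shows "c * (x \<bullet> x) \<le> S x x"
proof (cases "x = 0")
  case True
  then show ?thesis using bilinear_lzero[OF S] by simp
next
  case False
  define u where "u = (1 / norm x) *\<^sub>R x"
  have "c \<le> S u u"
    using min U x False by (simp add: u_def subspace_scale)
  moreover have "S x x = (norm x)\<^sup>2 * S u u"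
    using False by (simp add: u_def bilinear_lmul[OF S] bilinear_rmul[OF S] power2_eq_square)
  ultimately show ?thesis
    using mult_right_mono[of c "S u u" "(norm x)\<^sup>2"] by (simp add: power2_norm_eq_inner mult.commute)
qed

text \<open>First variation: a minimiser of \<open>S x x\<close> on the unit sphere of \<open>U\<close> is an eigenvector.\<close>

lemma sphere_minimiser_S_orthogonal:
  fixes S :: "'a::real_inner \<Rightarrow> 'a \<Rightarrow> real"
  assumes SB: "sym_bilinear S" and U: "subspace U" and f: "f \<in> U" "norm f = 1"
    and min: "\<forall>x\<in>U. norm x = 1 \<longrightarrow> S f f \<le> S x x"
    and y: "y \<in> U" "f \<bullet> y = 0"
  shows "S f y = 0"
proof (rule linear_coeff_eq_0_if_quadratic_nonneg)
  fix t :: real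
  have S: "bilinear S" and Ssym: "S y f = S f y" using SB by (auto simp: sym_bilinear_def)
  have ff: "f \<bullet> f = 1" using f(2) by (simp add: norm_eq_1)
  have "f + t *\<^sub>R y \<in> U" using f y U by (simp add: subspace_add subspace_scale)
  from bilinear_ge_min_on_sphere[OF S U min this]
  have "S f f * ((f + t *\<^sub>R y) \<bullet> (f + t *\<^sub>R y)) \<le> S (f + t *\<^sub>R y) (f + t *\<^sub>R y)" .
  moreover have "(f + t *\<^sub>R y) \<bullet> (f + t *\<^sub>R y) = 1 + t\<^sup>2 * (y \<bullet> y)"
    using ff y(2) by (simp add: inner_add_left inner_add_right inner_commute power2_eq_square)
  moreover have "S (f + t *\<^sub>R y) (f + t *\<^sub>R y) = S f f + 2 * t * S f y + t\<^sup>2 * S y y"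
    by (simp add: bilinear_ladd[OF S] bilinear_radd[OF S] bilinear_lmul[OF S] bilinear_rmul[OF S]
        Ssym power2_eq_square algebra_simps)
  ultimately show "0 \<le> 2 * t * S f y + t\<^sup>2 * (S y y - S f f * (y \<bullet> y))"
    using ff y(2) inner_commute[of y f] by (simp add: algebra_simps power2_eq_square)
qed

lemma dim_orthogonal_slice:
  fixes f :: "'a::euclidean_space"
  assumes U: "subspace U" and f: "f \<in> U" "f \<bullet> f = 1"
  shows "dim U = Suc (dim (U \<inter> {y. f \<bullet> y = 0}))"
proof -
  define U' where "U' = U \<inter> {y. f \<bullet> y = 0}"
  have U': "subspace U'" unfolding U'_def by (rule subspace_inter[OF U subspace_hyperplane])
  have "U \<subseteq> span (insert f U')"
  proof
    fix u assume u: "u \<in> U"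
    have "u - (f \<bullet> u) *\<^sub>R f \<in> U'"
      unfolding U'_def using u f U by (simp add: subspace_diff subspace_scale inner_diff_right)
    then have "(f \<bullet> u) *\<^sub>R f + (u - (f \<bullet> u) *\<^sub>R f) \<in> span (insert f U')"
      by (intro span_add span_scale) (auto intro: span_base)
    then show "u \<in> span (insert f U')" by simp
  qed
  moreover have "span (insert f U') \<subseteq> U"
    using f U by (intro span_minimal) (auto simp: U'_def)
  ultimately have "dim U = dim (insert f U')"
    by (metis dim_span subset_antisym)
  moreover have "f \<notin> span U'"
    using f(2) U' by (simp add: span_eq_iff[THEN iffD2] U'_def)
  ultimately show ?thesis by (simp add: dim_insert U'_def)
qed

lemma eigenvalues_on_Cons:
  fixes S :: "'a::euclidean_space \<Rightarrow> 'a \<Rightarrow> real"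
  assumes SB: "sym_bilinear S" and U: "subspace U" and f: "f \<in> U" "norm f = 1"
    and min: "\<forall>x\<in>U. norm x = 1 \<longrightarrow> S f f \<le> S x x"
    and ev: "eigenvalues_on S (U \<inter> {y. f \<bullet> y = 0}) lam"
  shows "eigenvalues_on S U (case_nat (S f f) lam)"
proof -
  define U' where "U' = U \<inter> {y. f \<bullet> y = 0}"
  define k where "k = dim U'"
  have ff: "f \<bullet> f = 1" using f(2) by (simp add: norm_eq_1)
  have dU: "dim U = Suc k" unfolding k_def U'_def by (rule dim_orthogonal_slice[OF U f(1) ff])
  obtain e where e: "orthonormal_frame k e" "\<forall>i<k. e i \<in> U'"
    and diag: "\<forall>i<k. \<forall>j<k. S (e i) (e j) = (if i = j then lam i else 0)"
    and sorted: "\<forall>i j. i \<le> j \<longrightarrow> j < k \<longrightarrow> lam i \<le> lam j"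
    using ev unfolding eigenvalues_on_def U'_def k_def by blast
  have eU: "e i \<in> U" "f \<bullet> e i = 0" "e i \<bullet> f = 0" "S f (e i) = 0" "S (e i) f = 0" if "i < k" for i
    using e(2) that sphere_minimiser_S_orthogonal[OF SB U f min, of "e i"] SB
    by (auto simp: U'_def sym_bilinear_def inner_commute)
  define e' where "e' = case_nat f e"
  have frame: "orthonormal_frame (Suc k) e'"
    unfolding orthonormal_frame_def e'_def
    by (auto simp: less_Suc_eq_0_disj ff eU(2,3) orthonormal_frameD[OF e(1)] split: if_splits)
  moreover have in_U: "\<forall>i<Suc k. e' i \<in> U"
    by (auto simp: e'_def less_Suc_eq_0_disj f eU(1))
  moreover have "span (e' ` {..<Suc k}) = U"
    by (rule orthonormal_frame_span_eq[OF frame U dU in_U])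
  moreover have "\<forall>i<Suc k. \<forall>j<Suc k. S (e' i) (e' j) = (if i = j then case_nat (S f f) lam i else 0)"
    by (auto simp: e'_def less_Suc_eq_0_disj eU(4,5) diag split: if_splits)
  moreover have "case_nat (S f f) lam i \<le> case_nat (S f f) lam j" if "i \<le> j" "j < Suc k" for i j
  proof (cases i; cases j)
    fix j' assume "i = 0" "j = Suc j'"
    then have "S f f \<le> S (e j') (e j')"
      using min eU(1) orthonormal_frame_norm[OF e(1)] that by auto
    then show ?thesis using \<open>i = 0\<close> \<open>j = Suc j'\<close> diag that by auto
  qed (use that sorted in auto)
  ultimately show ?thesis
    unfolding eigenvalues_on_def dU by blast
qed

theorem eigenvalues_on_exists:
  fixes S :: "'a::euclidean_space \<Rightarrow> 'a \<Rightarrow> real"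
  assumes SB: "sym_bilinear S" and U: "subspace U"
  shows "\<exists>lam. eigenvalues_on S U lam"
  using U
proof (induction "dim U" arbitrary: U)
  case 0
  then have "U = {0}" using subspace_0 by auto
  then show ?case by (auto simp: eigenvalues_on_def orthonormal_frame_def)
next
  case (Suc k)
  have S: "bilinear S" using SB by (simp add: sym_bilinear_def)
  have "\<not> U \<subseteq> {0}" using Suc.hyps(2) by (metis dim_eq_0 Zero_not_Suc)
  then obtain x0 where x0: "x0 \<in> U" "x0 \<noteq> 0" by auto
  define K where "K = U \<inter> sphere 0 1"
  have "(1 / norm x0) *\<^sub>R x0 \<in> K" unfolding K_def using x0 Suc.prems
    by (simp add: subspace_scale)
  moreover have "compact K"
    unfolding K_def using closed_subspace[OF Suc.prems] by (metis Int_commute compact_Int_closed compact_sphere)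
  moreover have "continuous_on K (\<lambda>x. S x x)"
    using bilinear_conv_bounded_bilinear[of S] S
    by (intro bounded_bilinear.continuous_on[of S] continuous_on_id) auto
  ultimately obtain f where f: "f \<in> K" and fmin: "\<forall>y\<in>K. S f f \<le> S y y"
    using continuous_attains_inf[of K "\<lambda>x. S x x"] by blast
  have fU: "f \<in> U" "norm f = 1" and min: "\<forall>x\<in>U. norm x = 1 \<longrightarrow> S f f \<le> S x x"
    using f fmin unfolding K_def by auto
  have "k = dim (U \<inter> {y. f \<bullet> y = 0})"
    using dim_orthogonal_slice[OF Suc.prems fU(1)] fU(2) Suc.hyps(2) by (simp add: norm_eq_1)
  moreover have "subspace (U \<inter> {y. f \<bullet> y = 0})"
    by (rule subspace_inter[OF Suc.prems subspace_hyperplane])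
  ultimately obtain lam where "eigenvalues_on S (U \<inter> {y. f \<bullet> y = 0}) lam"
    using Suc.hyps(1) by blast
  then show ?case by (blast intro: eigenvalues_on_Cons[OF SB Suc.prems fU min])
qed

section \<open>Curvature tensors and cone sums\<close>

lemma sym_bilinear_inner: "sym_bilinear (inner :: 'a::real_inner \<Rightarrow> 'a \<Rightarrow> real)"
  unfolding sym_bilinear_def bilinear_def
  by (auto intro!: linearI simp: inner_add_left inner_add_right inner_commute)

lemma sym_bilinear_flat_sq: "sym_bilinear (flat_sq (\<nu>::'a::real_inner))"
  unfolding sym_bilinear_def bilinear_def flat_sq_def
  by (auto intro!: linearI simp: inner_add_left inner_add_right algebra_simps)

lemma KN_in_alg_curv:
  assumes "sym_bilinear A" "sym_bilinear B"
  shows "KN A B \<in> alg_curv"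
proof -
  have A: "bilinear A" "\<And>x y. A x y = A y x" and B: "bilinear B" "\<And>x y. B x y = B y x"
    using assms by (auto simp: sym_bilinear_def)
  note lin = bilinear_ladd[OF A(1)] bilinear_radd[OF A(1)] bilinear_lmul[OF A(1)] bilinear_rmul[OF A(1)]
    bilinear_ladd[OF B(1)] bilinear_radd[OF B(1)] bilinear_lmul[OF B(1)] bilinear_rmul[OF B(1)]
  have "multilinear4 (KN A B)"
    unfolding multilinear4_def KN_def by (auto intro!: linearI simp: lin algebra_simps)
  then show ?thesis
    unfolding alg_curv_def KN_def by (simp add: algebra_simps A(2) B(2))
qed

lemma alg_curvD:
  assumes "T \<in> alg_curv"
  shows "multilinear4 T" "\<And>a b c d. T a b c d = - T b a c d" "\<And>a b c d. T a b c d = T c d a b"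
    "\<And>a b c d. T a b c d + T b c a d + T c a b d = 0"
  using assms unfolding alg_curv_def mem_Collect_eq by blast+

lemma alg_curv_diff_scaled:
  assumes A: "A \<in> alg_curv" and B: "B \<in> alg_curv"
  shows "(\<lambda>a b c d. A a b c d - t * B a b c d) \<in> alg_curv"
proof -
  have lin: "linear (\<lambda>x. F x - t * G x)" if "linear F" "linear G" for F G :: "'a \<Rightarrow> real"
    using that by (intro linearI) (simp_all add: linear_add linear_scale algebra_simps)
  have "multilinear4 (\<lambda>a b c d. A a b c d - t * B a b c d)"
    using alg_curvD(1)[OF A] alg_curvD(1)[OF B] unfolding multilinear4_def by (auto intro!: lin)
  then show ?thesis
    unfolding alg_curv_def mem_Collect_eq
    using alg_curvD(2-4)[OF A] alg_curvD(2-4)[OF B] by (smt (verit, best) right_diff_distrib)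
qed

text \<open>\<open>wedge_contract \<nu> x y\<close> is the contraction of \<open>x \<and> y\<close> with \<open>\<nu>\<^sup>\<flat>\<close>.\<close>

definition wedge_contract :: "'a::real_inner \<Rightarrow> 'a \<Rightarrow> 'a \<Rightarrow> 'a" where
  "wedge_contract \<nu> x y = (\<nu> \<bullet> y) *\<^sub>R x - (\<nu> \<bullet> x) *\<^sub>R y"

lemma inner_wedge_contract:
  "wedge_contract \<nu> x y \<bullet> z = (\<nu> \<bullet> y) * (x \<bullet> z) - (\<nu> \<bullet> x) * (y \<bullet> z)"
  by (simp add: wedge_contract_def inner_diff_left)

lemma orthogonal_wedge_contract: "\<nu> \<bullet> wedge_contract \<nu> x y = 0"
  by (simp add: inner_commute[of \<nu>] inner_wedge_contract)

lemma KN_flat_sq_sectional: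
  assumes "sym_bilinear S"
  shows "KN S (flat_sq \<nu>) x y x y = S (wedge_contract \<nu> x y) (wedge_contract \<nu> x y)"
proof -
  have S: "bilinear S" and Ssym: "\<And>x y. S x y = S y x" using assms by (auto simp: sym_bilinear_def)
  show ?thesis
    unfolding KN_def flat_sq_def wedge_contract_def
    by (simp add: bilinear_lsub[OF S] bilinear_rsub[OF S] bilinear_lmul[OF S] bilinear_rmul[OF S]
        Ssym[of y x] algebra_simps)
qed

lemma KN_inner_sectional:
  assumes "orthonormal_frame n e" "p < n" "q < n" "p \<noteq> q"
  shows "KN inner inner (e p) (e q) (e p) (e q) = 2"
  using assms by (simp add: KN_def orthonormal_frameD)

definition cone_sum :: "nat \<Rightarrow> (nat \<Rightarrow> 'a::euclidean_space) \<Rightarrow> 'a tensor4 \<Rightarrow> real" where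
  "cone_sum m e T = (\<Sum>p<m. \<Sum>q\<in>{p+1..<DIM('a)}. T (e p) (e q) (e p) (e q))"

lemma cone_C_iff:
  "T \<in> cone_C m \<longleftrightarrow> T \<in> alg_curv \<and> (\<forall>e. orthonormal_frame DIM('a::euclidean_space) e \<longrightarrow> 0 \<le> cone_sum m e (T::'a tensor4))"
  unfolding cone_C_def cone_sum_def by simp

definition tensor_dist :: "'a::euclidean_space tensor4 \<Rightarrow> 'a tensor4 \<Rightarrow> real" where
  "tensor_dist T' T =
     (\<Sum>b1\<in>Basis. \<Sum>b2\<in>Basis. \<Sum>b3\<in>Basis. \<Sum>b4\<in>Basis. \<bar>T' b1 b2 b3 b4 - T b1 b2 b3 b4\<bar>)"

lemma tensor_dist_nonneg: "0 \<le> tensor_dist T' T"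
  unfolding tensor_dist_def by (intro sum_nonneg) simp

lemma linear_real_basis_expansion:
  fixes f :: "'a::euclidean_space \<Rightarrow> real"
  assumes "linear f"
  shows "f x = (\<Sum>b\<in>Basis. (x \<bullet> b) * f b)"
  using Linear_Algebra.linear_componentwise[OF assms, of x 1] by (simp add: inner_real_def)

lemma multilinear4_basis_expansion:
  fixes T :: "'a::euclidean_space tensor4"
  assumes "multilinear4 T"
  shows "T x y z w = (\<Sum>b1\<in>Basis. (x \<bullet> b1) * (\<Sum>b2\<in>Basis. (y \<bullet> b2) *
           (\<Sum>b3\<in>Basis. (z \<bullet> b3) * (\<Sum>b4\<in>Basis. (w \<bullet> b4) * T b1 b2 b3 b4))))"
proof -
  have "linear (\<lambda>a. T a b c d)" "linear (\<lambda>b. T a b c d)" "linear (\<lambda>c. T a b c d)"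
    "linear (\<lambda>d. T a b c d)" for a b c d
    using assms unfolding multilinear4_def by auto
  note expand = linear_real_basis_expansion[OF this(1)] linear_real_basis_expansion[OF this(2)]
    linear_real_basis_expansion[OF this(3)] linear_real_basis_expansion[OF this(4)]
  show ?thesis
    by (subst expand(1), subst expand(2), subst expand(3), subst expand(4)) (rule refl)
qed

lemma multilinear4_diff_le_tensor_dist:
  fixes T T' :: "'a::euclidean_space tensor4"
  assumes "multilinear4 T" "multilinear4 T'"
    and "norm x \<le> 1" "norm y \<le> 1" "norm z \<le> 1" "norm w \<le> 1"
  shows "\<bar>T' x y z w - T x y z w\<bar> \<le> tensor_dist T' T"
proof -
  have coeff: "\<bar>(u \<bullet> b) * d\<bar> \<le> \<bar>d\<bar>" if "norm u \<le> 1" "b \<in> Basis" for u b and d :: real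
    using Basis_le_norm[OF that(2), of u] that(1) by (simp add: abs_mult mult_left_le_one_le)
  note step = order_trans[OF sum_abs sum_mono[OF order_trans[OF coeff]]]
  have "T' x y z w - T x y z w = (\<Sum>b1\<in>Basis. (x \<bullet> b1) * (\<Sum>b2\<in>Basis. (y \<bullet> b2) *
      (\<Sum>b3\<in>Basis. (z \<bullet> b3) * (\<Sum>b4\<in>Basis. (w \<bullet> b4) * (T' b1 b2 b3 b4 - T b1 b2 b3 b4)))))"
    by (subst multilinear4_basis_expansion[OF assms(2)], subst multilinear4_basis_expansion[OF assms(1)])
       (simp only: sum_subtractf[symmetric] right_diff_distrib[symmetric])
  also have "\<bar>\<dots>\<bar> \<le> tensor_dist T' T"
    unfolding tensor_dist_def
    by (intro step[OF assms(3)] step[OF assms(4)] step[OF assms(5)]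
        order_trans[OF sum_abs sum_mono[OF coeff[OF assms(6)]]]) auto
  finally show ?thesis .
qed

lemma open_tensor_dist_ball: "open {T'. tensor_dist T' (T::'a::euclidean_space tensor4) < r}"
proof -
  have "continuous_on UNIV (\<lambda>T'::'a tensor4. T' a b c d)" for a b c d
  proof -
    have "continuous_on UNIV (\<lambda>T'::'a tensor4. T' a)" by simp
    then have "continuous_on UNIV (\<lambda>T'::'a tensor4. T' a b)"
      by (rule continuous_on_product_then_coordinatewise)
    then have "continuous_on UNIV (\<lambda>T'::'a tensor4. T' a b c)"
      by (rule continuous_on_product_then_coordinatewise)
    then show ?thesis by (rule continuous_on_product_then_coordinatewise)
  qed
  then have "continuous_on UNIV (\<lambda>T'. tensor_dist T' T)"
    unfolding tensor_dist_def by (intro continuous_intros)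
  then show ?thesis by (intro open_Collect_less) auto
qed

lemma cone_sum_diff_le:
  fixes T T' :: "'a::euclidean_space tensor4"
  assumes "multilinear4 T" "multilinear4 T'" "orthonormal_frame DIM('a) e"
  shows "cone_sum m e T - cone_sum m e T' \<le> real (m * DIM('a)) * tensor_dist T' T"
proof -
  define n where "n = DIM('a)"
  have unit: "norm (e i) \<le> 1" if "i < n" for i
    using orthonormal_frame_norm[OF assms(3)] that by (simp add: n_def)
  have "cone_sum m e T - cone_sum m e T'
      = (\<Sum>p<m. \<Sum>q\<in>{p+1..<n}. T (e p) (e q) (e p) (e q) - T' (e p) (e q) (e p) (e q))"
    unfolding cone_sum_def n_def by (simp add: sum_subtractf)
  also have "\<dots> \<le> (\<Sum>p<m. \<Sum>q\<in>{p+1..<n}. tensor_dist T' T)"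
  proof (intro sum_mono)
    fix p q assume "q \<in> {p+1..<n}"
    then have "norm (e p) \<le> 1" "norm (e q) \<le> 1" using unit by auto
    then show "T (e p) (e q) (e p) (e q) - T' (e p) (e q) (e p) (e q) \<le> tensor_dist T' T"
      using multilinear4_diff_le_tensor_dist[OF assms(1,2)] by (smt (verit))
  qed
  also have "\<dots> \<le> (\<Sum>p<m. real n * tensor_dist T' T)"
    using tensor_dist_nonneg[of T' T] by (intro sum_mono) (simp add: mult_right_mono)
  finally show ?thesis by (simp add: n_def)
qed

lemma interior_cone_C_if_uniformly_positive:
  fixes T :: "'a::euclidean_space tensor4"
  assumes T: "T \<in> alg_curv" and c: "0 < c"
    and bound: "\<And>e. orthonormal_frame DIM('a) e \<Longrightarrow> c \<le> cone_sum m e T"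
  shows "T \<in> (top_of_set alg_curv) interior_of (cone_C m)"
proof -
  define N where "N = real (m * DIM('a))"
  define r where "r = c / (N + 1)"
  have "0 \<le> N" by (simp add: N_def)
  then have "N * r < c" "0 < r" using c by (simp_all add: r_def field_simps)
  define U where "U = alg_curv \<inter> {T'. tensor_dist T' T < r}"
  have "U \<subseteq> cone_C m"
  proof
    fix T' assume T': "T' \<in> U"
    have "0 \<le> cone_sum m e T'" if e: "orthonormal_frame DIM('a) e" for e
    proof -
      have "cone_sum m e T - cone_sum m e T' \<le> N * tensor_dist T' T"
        unfolding N_def using T' T e by (intro cone_sum_diff_le) (auto simp: U_def alg_curv_def)
      also have "\<dots> \<le> N * r" using T' by (intro mult_left_mono) (auto simp: U_def N_def)
      finally show ?thesis using bound[OF e] \<open>N * r < c\<close> by simp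
    qed
    then show "T' \<in> cone_C m" using T' by (simp add: cone_C_iff U_def)
  qed
  moreover have "openin (top_of_set alg_curv) U"
    unfolding U_def by (rule openin_open_Int[OF open_tensor_dist_ball])
  moreover have "T \<in> U" using T \<open>0 < r\<close> by (simp add: U_def tensor_dist_def)
  ultimately show ?thesis unfolding interior_of_def by blast
qed

text \<open>An interior point survives subtraction of a small multiple of
  \<open>KN inner inner\<close>, whose cone sums are strictly positive.\<close>

lemma cone_sum_pos_if_interior_cone_C:
  fixes T :: "'a::euclidean_space tensor4"
  assumes T: "T \<in> (top_of_set alg_curv) interior_of (cone_C m)"
    and m: "0 < m" "m < DIM('a)" and e: "orthonormal_frame DIM('a) e"
  shows "0 < cone_sum m e T"
proof -
  obtain U where U: "open U" "T \<in> alg_curv \<inter> U" "alg_curv \<inter> U \<subseteq> cone_C m"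
    using T unfolding interior_of_def openin_open by blast
  define R where "R = (KN inner inner :: 'a tensor4)"
  define \<gamma> where "\<gamma> t = (\<lambda>a b c d. T a b c d - t * R a b c d)" for t :: real
  have "continuous_on UNIV \<gamma>"
    unfolding \<gamma>_def by (intro continuous_on_coordinatewise_then_product continuous_intros)
  then have "open (\<gamma> -` U)" by (rule open_vimage[OF U(1)])
  moreover have "0 \<in> \<gamma> -` U" using U(2) by (simp add: \<gamma>_def)
  ultimately obtain \<epsilon> where "\<epsilon> > 0" "ball 0 \<epsilon> \<subseteq> \<gamma> -` U" by (rule openE)
  then have t: "\<epsilon> / 2 > 0" and "\<epsilon> / 2 \<in> ball 0 \<epsilon>" by simp_all
  then have "\<gamma> (\<epsilon> / 2) \<in> U" using \<open>ball 0 \<epsilon> \<subseteq> \<gamma> -` U\<close> by blast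
  have "R \<in> alg_curv" unfolding R_def by (rule KN_in_alg_curv[OF sym_bilinear_inner sym_bilinear_inner])
  then have "\<gamma> (\<epsilon> / 2) \<in> alg_curv"
    unfolding \<gamma>_def using U(2) by (intro alg_curv_diff_scaled) auto
  with \<open>\<gamma> (\<epsilon> / 2) \<in> U\<close> U(3) have "0 \<le> cone_sum m e (\<gamma> (\<epsilon> / 2))"
    using e by (auto simp: cone_C_iff)
  moreover have "cone_sum m e (\<gamma> t) = cone_sum m e T - t * cone_sum m e R" for t
    unfolding cone_sum_def \<gamma>_def by (simp add: sum_subtractf sum_distrib_left)
  moreover have "0 < cone_sum m e R"
  proof -
    have "cone_sum m e R = (\<Sum>p<m. \<Sum>q\<in>{p+1..<DIM('a)}. 2)"
      unfolding cone_sum_def R_def using m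
      by (intro sum.cong refl KN_inner_sectional[OF e]) auto
    also have "\<dots> > 0" using m by (intro sum_pos) auto
    finally show ?thesis .
  qed
  ultimately show ?thesis using t by (smt (verit) mult_pos_pos)
qed

section \<open>Elementary inequalities\<close>

lemma sum_lower_triangle_swap: "(\<Sum>p<n. \<Sum>q<p. g p q) = (\<Sum>q<n. \<Sum>p\<in>{Suc q..<n}. (g p q :: real))"
proof (induction n)
  case 0
  then show ?case by simp
next
  case (Suc n)
  have "(\<Sum>q<Suc n. \<Sum>p\<in>{Suc q..<Suc n}. g p q) = (\<Sum>q<n. \<Sum>p\<in>{Suc q..<Suc n}. g p q)"
    by simp
  also have "\<dots> = (\<Sum>q<n. (\<Sum>p\<in>{Suc q..<n}. g p q) + g n q)"
    by (rule sum.cong) auto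
  finally show ?case using Suc by (simp add: sum.distrib)
qed

lemma sum_upper_triangle_symmetric:
  fixes g :: "nat \<Rightarrow> nat \<Rightarrow> real"
  assumes sym: "\<And>p q. g p q = g q p" and diag: "\<And>p. g p p = 0"
  shows "2 * (\<Sum>p<n. \<Sum>q\<in>{Suc p..<n}. g p q) = (\<Sum>p<n. \<Sum>q<n. g p q)"
proof -
  have split: "(\<Sum>q<n. g p q) = (\<Sum>q<p. g p q) + (\<Sum>q\<in>{Suc p..<n}. g p q)" if "p < n" for p
  proof -
    have "{..<n} = {..<p} \<union> {p} \<union> {Suc p..<n}" using that by auto
    then have "(\<Sum>q<n. g p q) = (\<Sum>q\<in>{..<p} \<union> {p} \<union> {Suc p..<n}. g p q)" by simp
    also have "\<dots> = (\<Sum>q<p. g p q) + g p p + (\<Sum>q\<in>{Suc p..<n}. g p q)"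
      by (subst sum.union_disjoint, auto)+
    finally show ?thesis using diag by simp
  qed
  have "(\<Sum>p<n. \<Sum>q<n. g p q) = (\<Sum>p<n. \<Sum>q<p. g p q) + (\<Sum>p<n. \<Sum>q\<in>{Suc p..<n}. g p q)"
    by (simp add: split sum.distrib)
  also have "(\<Sum>p<n. \<Sum>q<p. g p q) = (\<Sum>q<n. \<Sum>p\<in>{Suc q..<n}. g p q)" by (rule sum_lower_triangle_swap)
  also have "\<dots> = (\<Sum>p<n. \<Sum>q\<in>{Suc p..<n}. g p q)" by (simp add: sym)
  finally show ?thesis by simp
qed

lemma lagrange_identity_sum:
  fixes u v :: "nat \<Rightarrow> real"
  shows "(\<Sum>p<n. \<Sum>q<n. (u q * v p - u p * v q)\<^sup>2)
     = 2 * ((\<Sum>p<n. (u p)\<^sup>2) * (\<Sum>p<n. (v p)\<^sup>2)) - 2 * (\<Sum>p<n. u p * v p)\<^sup>2"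
proof -
  have e: "(u q * v p - u p * v q)\<^sup>2 = (v p)\<^sup>2*(u q)\<^sup>2 + (u p)\<^sup>2*(v q)\<^sup>2 - 2*((u p * v p)*(u q * v q))" for p q
    by (simp add: power2_eq_square algebra_simps)
  have "(\<Sum>p<n. \<Sum>q<n. (u q * v p - u p * v q)\<^sup>2)
     = (\<Sum>p<n. \<Sum>q<n. (v p)\<^sup>2*(u q)\<^sup>2) + (\<Sum>p<n. \<Sum>q<n. (u p)\<^sup>2*(v q)\<^sup>2) - 2*(\<Sum>p<n. \<Sum>q<n. (u p * v p)*(u q * v q))"
    by (simp only: e sum.distrib sum_subtractf sum_distrib_left)
  also have "(\<Sum>p<n. \<Sum>q<n. (v p)\<^sup>2*(u q)\<^sup>2) = (\<Sum>p<n. (v p)\<^sup>2) * (\<Sum>p<n. (u p)\<^sup>2)"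
    by (simp add: sum_product)
  also have "(\<Sum>p<n. \<Sum>q<n. (u p)\<^sup>2*(v q)\<^sup>2) = (\<Sum>p<n. (u p)\<^sup>2) * (\<Sum>p<n. (v p)\<^sup>2)"
    by (simp add: sum_product)
  also have "(\<Sum>p<n. \<Sum>q<n. (u p * v p)*(u q * v q)) = (\<Sum>p<n. u p * v p)\<^sup>2"
    by (simp add: sum_product power2_eq_square)
  finally show ?thesis by simp
qed

lemma sum_prefix_sums:
  fixes a :: "nat \<Rightarrow> real"
  shows "(\<Sum>p<m. \<Sum>q<Suc p. a q) = (\<Sum>q<m. real (m - q) * a q)"
proof (induction m)
  case 0
  then show ?case by simp
next
  case (Suc m)
  have "(\<Sum>q<Suc m. real (Suc m - q) * a q) = (\<Sum>q<m. real (Suc m - q) * a q) + a m" by simp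
  also have "(\<Sum>q<m. real (Suc m - q) * a q) = (\<Sum>q<m. real (m - q) * a q) + (\<Sum>q<m. a q)"
    by (simp add: sum.distrib[symmetric] Suc_diff_le algebra_simps of_nat_Suc)
  finally show ?case using Suc by simp
qed

lemma sum_pair_sums_ge:
  fixes a :: "nat \<Rightarrow> real"
  assumes nonneg: "\<And>k. 0 \<le> a k" and mn: "m + 1 \<le> n"
  shows "real m * (\<Sum>k<n. a k) \<le> (\<Sum>p<m. \<Sum>q\<in>{Suc p..<n}. a p + a q)"
proof -
  define A where "A = (\<Sum>k<n. a k)"
  have tail: "(\<Sum>q\<in>{Suc p..<n}. a q) = A - (\<Sum>q<Suc p. a q)" if "p < n" for p
  proof -
    have "{..<n} = {..<Suc p} \<union> {Suc p..<n}" using that by auto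
    then have "A = (\<Sum>q<Suc p. a q) + (\<Sum>q\<in>{Suc p..<n}. a q)"
      unfolding A_def using sum.union_disjoint[of "{..<Suc p}" "{Suc p..<n}" a]
      by (simp del: sum.lessThan_Suc lessThan_Suc add: disjoint_iff)
    then show ?thesis by simp
  qed
  have "(\<Sum>p<m. \<Sum>q\<in>{Suc p..<n}. a p + a q) = (\<Sum>p<m. real (n - Suc p) * a p + (A - (\<Sum>q<Suc p. a q)))"
    by (rule sum.cong) (use mn tail in \<open>auto simp: sum.distrib\<close>)
  also have "\<dots> = (\<Sum>p<m. real (n - Suc p) * a p) + real m * A - (\<Sum>p<m. \<Sum>q<Suc p. a q)"
    by (simp only: sum.distrib sum_subtractf sum_constant card_lessThan add_diff_eq)
  also have "\<dots> = (\<Sum>p<m. real (n - Suc p) * a p) + real m * A - (\<Sum>q<m. real (m - q) * a q)"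
    by (simp only: sum_prefix_sums)
  also have "\<dots> \<ge> real m * A"
  proof -
    have "(\<Sum>q<m. real (m - q) * a q) \<le> (\<Sum>p<m. real (n - Suc p) * a p)"
      by (rule sum_mono) (use mn nonneg in \<open>auto intro!: mult_right_mono\<close>)
    then show ?thesis by simp
  qed
  finally show ?thesis unfolding A_def .
qed

lemma sum_lowest_le_weighted_sum:
  fixes lam a :: "nat \<Rightarrow> real"
  assumes sorted: "\<And>i j. i \<le> j \<Longrightarrow> j < k \<Longrightarrow> lam i \<le> lam j"
    and m: "1 \<le> m" "m \<le> k" and a0: "\<And>i. i < k \<Longrightarrow> 0 \<le> a i" and a1: "\<And>i. i < k \<Longrightarrow> a i \<le> 1"
    and asum: "real m \<le> (\<Sum>i<k. a i)" and nonneg: "0 \<le> (\<Sum>i<m. lam i)"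
  shows "(\<Sum>i<m. lam i) \<le> (\<Sum>i<k. lam i * a i)"
proof -
  define \<mu> where "\<mu> = lam (m - 1)"
  have "0 \<le> \<mu>"
  proof (rule ccontr)
    assume "\<not> 0 \<le> \<mu>"
    have "(\<Sum>i<m. lam i) \<le> (\<Sum>i<m. \<mu>)"
      using sorted m by (intro sum_mono) (auto simp: \<mu>_def)
    also have "\<dots> < 0" using \<open>\<not> 0 \<le> \<mu>\<close> m by (simp add: mult_pos_neg)
    finally show False using nonneg by simp
  qed
  have split: "(\<Sum>i<k. g i) = (\<Sum>i<m. g i) + (\<Sum>i\<in>{m..<k}. g i)" for g :: "nat \<Rightarrow> real"
    using sum.atLeastLessThan_concat[of 0 m k g] m by (simp add: lessThan_atLeast0)
  have "(\<Sum>i<m. \<mu> * (a i - 1)) \<le> (\<Sum>i<m. lam i * (a i - 1))"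
  proof (rule sum_mono)
    fix i assume "i \<in> {..<m}"
    then have "lam i \<le> \<mu>" "a i - 1 \<le> 0" using sorted a1[of i] m by (auto simp: \<mu>_def)
    then show "\<mu> * (a i - 1) \<le> lam i * (a i - 1)" by (simp add: mult_right_mono_neg)
  qed
  moreover have "(\<Sum>i\<in>{m..<k}. \<mu> * a i) \<le> (\<Sum>i\<in>{m..<k}. lam i * a i)"
  proof (rule sum_mono)
    fix i assume "i \<in> {m..<k}"
    then have "\<mu> \<le> lam i" "0 \<le> a i" using sorted m a0[of i] by (auto simp: \<mu>_def)
    then show "\<mu> * a i \<le> lam i * a i" by (simp add: mult_right_mono)
  qed
  moreover have "(\<Sum>i<m. \<mu> * (a i - 1)) + (\<Sum>i\<in>{m..<k}. \<mu> * a i) = \<mu> * ((\<Sum>i<k. a i) - m)"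
    by (simp add: split[of a] sum_distrib_left[symmetric] sum_subtractf algebra_simps)
  moreover have "0 \<le> \<mu> * ((\<Sum>i<k. a i) - m)" using \<open>0 \<le> \<mu>\<close> asum by simp
  ultimately show ?thesis
    unfolding split[of "\<lambda>i. lam i * a i"] by (simp add: algebra_simps sum_subtractf)
qed

section \<open>Cone sums of \<open>S \<owedge> \<nu>\<^sup>\<flat>\<otimes>\<nu>\<^sup>\<flat>\<close>\<close>

lemma sum_sq_inner_wedge_contract:
  fixes e :: "nat \<Rightarrow> 'a::euclidean_space"
  assumes e: "orthonormal_frame DIM('a) e"
  shows "(\<Sum>p<DIM('a). \<Sum>q\<in>{Suc p..<DIM('a)}. (wedge_contract \<nu> (e p) (e q) \<bullet> x)\<^sup>2)
       = (\<nu> \<bullet> \<nu>) * (x \<bullet> x) - (\<nu> \<bullet> x)\<^sup>2"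
proof -
  define n where "n = DIM('a)"
  define u where "u p = \<nu> \<bullet> e p" for p
  define v where "v p = x \<bullet> e p" for p
  have parseval: "y \<bullet> z = (\<Sum>p<n. (y \<bullet> e p) * (z \<bullet> e p))" for y z
    unfolding n_def by (rule orthonormal_frame_inner_expansion[OF e in_span_orthonormal_frame[OF e]])
  have "2 * (\<Sum>p<n. \<Sum>q\<in>{Suc p..<n}. (u q * v p - u p * v q)\<^sup>2)
      = (\<Sum>p<n. \<Sum>q<n. (u q * v p - u p * v q)\<^sup>2)"
    by (rule sum_upper_triangle_symmetric) (simp_all add: power2_eq_square algebra_simps)
  also have "\<dots> = 2 * ((\<Sum>p<n. (u p)\<^sup>2) * (\<Sum>p<n. (v p)\<^sup>2)) - 2 * (\<Sum>p<n. u p * v p)\<^sup>2"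
    by (rule lagrange_identity_sum)
  also have "(\<Sum>p<n. (u p)\<^sup>2) = \<nu> \<bullet> \<nu>" using parseval[of \<nu> \<nu>] by (simp add: u_def power2_eq_square)
  also have "(\<Sum>p<n. (v p)\<^sup>2) = x \<bullet> x" using parseval[of x x] by (simp add: v_def power2_eq_square)
  also have "(\<Sum>p<n. u p * v p) = \<nu> \<bullet> x" using parseval[of \<nu> x] by (simp add: u_def v_def)
  finally show ?thesis
    by (simp add: n_def u_def v_def inner_wedge_contract inner_commute[of "e _" x])
qed

lemma sum_inner_wedge_contract_ge:
  fixes e :: "nat \<Rightarrow> 'a::euclidean_space"
  assumes e: "orthonormal_frame DIM('a) e" and \<nu>: "norm \<nu> = 1" and m: "m < DIM('a)"
  shows "real m \<le> (\<Sum>p<m. \<Sum>q\<in>{Suc p..<DIM('a)}.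
                      wedge_contract \<nu> (e p) (e q) \<bullet> wedge_contract \<nu> (e p) (e q))"
proof -
  define n where "n = DIM('a)"
  have "(\<Sum>p<n. (\<nu> \<bullet> e p)\<^sup>2) = \<nu> \<bullet> \<nu>"
    using orthonormal_frame_inner_expansion[OF e in_span_orthonormal_frame[OF e], of \<nu> \<nu>]
    by (simp add: n_def power2_eq_square)
  then have "real m = real m * (\<Sum>p<n. (\<nu> \<bullet> e p)\<^sup>2)" using \<nu> by (simp add: norm_eq_1)
  also have "\<dots> \<le> (\<Sum>p<m. \<Sum>q\<in>{Suc p..<n}. (\<nu> \<bullet> e p)\<^sup>2 + (\<nu> \<bullet> e q)\<^sup>2)"
    using m by (intro sum_pair_sums_ge) (simp_all add: n_def)
  also have "\<dots> = (\<Sum>p<m. \<Sum>q\<in>{Suc p..<n}. wedge_contract \<nu> (e p) (e q) \<bullet> wedge_contract \<nu> (e p) (e q))"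
    using orthonormal_frameD[OF e] m
    by (intro sum.cong refl)
       (auto simp: n_def wedge_contract_def inner_diff_left inner_diff_right power2_eq_square)
  finally show ?thesis by (simp add: n_def)
qed

lemma quadratic_form_diagonal_expansion:
  assumes S: "bilinear S" and f: "orthonormal_frame k f"
    and diag: "\<forall>i<k. \<forall>j<k. S (f i) (f j) = (if i = j then lam i else 0)"
    and x: "x \<in> span (f ` {..<k})"
  shows "S x x = (\<Sum>i<k. lam i * (x \<bullet> f i)\<^sup>2)"
proof -
  have x_eq: "x = (\<Sum>i<k. (x \<bullet> f i) *\<^sub>R f i)" by (rule orthonormal_frame_expansion[OF f x])
  have "S x x = (\<Sum>i<k. \<Sum>j<k. (x \<bullet> f i) * (x \<bullet> f j) * S (f i) (f j))"
    by (subst (1 2) x_eq)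
       (simp add: bilinear_sum[OF S] bilinear_lmul[OF S] bilinear_rmul[OF S] sum.cartesian_product ac_simps)
  also have "\<dots> = (\<Sum>i<k. lam i * (x \<bullet> f i)\<^sup>2)"
  proof (intro sum.cong refl)
    fix i assume i: "i \<in> {..<k}"
    then have "(\<Sum>j<k. (x \<bullet> f i) * (x \<bullet> f j) * S (f i) (f j))
        = (\<Sum>j<k. if j = i then lam i * (x \<bullet> f i)\<^sup>2 else 0)"
      using diag by (intro sum.cong refl) (auto simp: power2_eq_square)
    then show "(\<Sum>j<k. (x \<bullet> f i) * (x \<bullet> f j) * S (f i) (f j)) = lam i * (x \<bullet> f i)\<^sup>2"
      using i by simp
  qed
  finally show ?thesis .
qed

text \<open>With \<open>w\<^sub>p\<^sub>q = wedge_contract \<nu> (e p) (e q) \<in> W\<close> the cone sum of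
  \<open>S \<owedge> \<nu>\<^sup>\<flat>\<otimes>\<nu>\<^sup>\<flat>\<close> becomes \<open>\<Sum>\<^sub>i \<lambda>\<^sub>i a\<^sub>i\<close> with weights
  \<open>a\<^sub>i = \<Sum>\<^sub>p\<^sub>q \<langle>w\<^sub>p\<^sub>q, f\<^sub>i\<rangle>\<^sup>2\<close> in \<open>[0, 1]\<close> of total mass at least \<open>m\<close>.\<close>

lemma cone_sum_KN_flat_sq_ge:
  fixes S :: "'a::euclidean_space \<Rightarrow> 'a \<Rightarrow> real"
  assumes SB: "sym_bilinear S" and ev: "eigenvalues_on S W lam"
    and W: "W = {x. \<nu> \<bullet> x = 0}" and \<nu>: "norm \<nu> = 1"
    and m: "1 \<le> m" "m < DIM('a)" and nonneg: "0 \<le> (\<Sum>i<m. lam i)"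
    and e: "orthonormal_frame DIM('a) e"
  shows "(\<Sum>i<m. lam i) \<le> cone_sum m e (KN S (flat_sq \<nu>))"
proof -
  define n where "n = DIM('a)"
  define k where "k = n - 1"
  have dW: "dim W = k" using \<nu> dim_hyperplane[of \<nu>] by (cases "\<nu> = 0") (auto simp: W k_def n_def)
  obtain f where f: "orthonormal_frame k f" "\<forall>i<k. f i \<in> W" "span (f ` {..<k}) = W"
    and diag: "\<forall>i<k. \<forall>j<k. S (f i) (f j) = (if i = j then lam i else 0)"
    and sorted: "\<forall>i j. i \<le> j \<longrightarrow> j < k \<longrightarrow> lam i \<le> lam j"
    using ev unfolding eigenvalues_on_def dW by blast
  define w where "w p q = wedge_contract \<nu> (e p) (e q)" for p q
  have w_in_W: "w p q \<in> W" for p q by (simp add: W w_def orthogonal_wedge_contract)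
  define a where "a i = (\<Sum>p<m. \<Sum>q\<in>{Suc p..<n}. (w p q \<bullet> f i)\<^sup>2)" for i
  have "cone_sum m e (KN S (flat_sq \<nu>)) = (\<Sum>p<m. \<Sum>q\<in>{Suc p..<n}. S (w p q) (w p q))"
    by (simp add: cone_sum_def KN_flat_sq_sectional[OF SB] w_def n_def)
  also have "\<dots> = (\<Sum>i<k. lam i * a i)"
    using quadratic_form_diagonal_expansion[OF _ f(1) diag] SB w_in_W f(3)
    by (simp add: sym_bilinear_def a_def sum_distrib_left sum.swap[of _ "{..<k}"])
  finally have cone_sum_eq: "cone_sum m e (KN S (flat_sq \<nu>)) = (\<Sum>i<k. lam i * a i)" .
  have a_le_1: "a i \<le> 1" if "i < k" for i
  proof -
    have "f i \<bullet> f i = 1" "\<nu> \<bullet> f i = 0" using orthonormal_frameD[OF f(1) that that] f(2) W that by auto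
    moreover have "a i \<le> (\<Sum>p<n. \<Sum>q\<in>{Suc p..<n}. (w p q \<bullet> f i)\<^sup>2)"
      unfolding a_def using m by (intro sum_mono2) (auto simp: n_def intro: sum_nonneg)
    ultimately show ?thesis
      using sum_sq_inner_wedge_contract[OF e, of \<nu> "f i"] \<nu> by (simp add: w_def n_def norm_eq_1)
  qed
  have "real m \<le> (\<Sum>p<m. \<Sum>q\<in>{Suc p..<n}. w p q \<bullet> w p q)"
    using sum_inner_wedge_contract_ge[OF e \<nu> m(2)] by (simp add: w_def n_def)
  also have "\<dots> = (\<Sum>p<m. \<Sum>q\<in>{Suc p..<n}. \<Sum>i<k. (w p q \<bullet> f i)\<^sup>2)"
    using orthonormal_frame_inner_expansion[OF f(1)] w_in_W f(3)
    by (intro sum.cong refl) (simp add: power2_eq_square)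
  also have "\<dots> = (\<Sum>i<k. a i)"
    by (simp add: a_def sum.swap[of _ "{..<k}"])
  finally have sum_a: "real m \<le> (\<Sum>i<k. a i)" .
  show ?thesis
    unfolding cone_sum_eq
    by (rule sum_lowest_le_weighted_sum[where k = k])
       (use sorted m a_le_1 sum_a nonneg in \<open>auto simp: a_def k_def n_def intro!: sum_nonneg\<close>)
qed

text \<open>In an eigenframe of \<open>S|\<^sub>W\<close> completed by \<open>\<nu>\<close>, the only nonzero terms of the cone sum
  are those with \<open>e\<^sub>q = \<nu>\<close>, and they give back the eigenvalues.\<close>

lemma cone_sum_KN_flat_sq_eigenframe:
  fixes S :: "'a::euclidean_space \<Rightarrow> 'a \<Rightarrow> real"
  assumes ev: "eigenvalues_on S W lam" and W: "W = {x. \<nu> \<bullet> x = 0}" and \<nu>: "norm \<nu> = 1"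
    and m: "m < DIM('a)"
  shows "\<exists>e. orthonormal_frame DIM('a) e \<and> cone_sum m e (KN S (flat_sq \<nu>)) = (\<Sum>i<m. lam i)"
proof -
  define k where "k = DIM('a) - 1"
  have n: "DIM('a) = Suc k" by (simp add: k_def)
  have dW: "dim W = k" using \<nu> dim_hyperplane[of \<nu>] by (cases "\<nu> = 0") (auto simp: W k_def)
  obtain f where f: "orthonormal_frame k f" "\<forall>i<k. f i \<in> W"
    and diag: "\<forall>i<k. \<forall>j<k. S (f i) (f j) = (if i = j then lam i else 0)"
    using ev unfolding eigenvalues_on_def dW by blast
  define e where "e i = (if i < k then f i else \<nu>)" for i
  have \<nu>f: "\<nu> \<bullet> f i = 0" if "i < k" for i using f(2) W that by auto
  have "orthonormal_frame DIM('a) e"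
    unfolding n e_def by (rule orthonormal_frame_snoc[OF f(1) _ \<nu>]) (simp add: \<nu>f)
  moreover have "cone_sum m e (KN S (flat_sq \<nu>)) = (\<Sum>p<m. lam p)"
    unfolding cone_sum_def
  proof (intro sum.cong refl)
    fix p assume "p \<in> {..<m}"
    then have p: "p < k" using m by (simp add: k_def)
    have "KN S (flat_sq \<nu>) (e p) (e q) (e p) (e q) = (if q = k then lam p else 0)" if "q < Suc k" for q
      using p that diag \<nu>f \<nu> by (auto simp: KN_def flat_sq_def e_def norm_eq_1)
    then show "(\<Sum>q\<in>{p+1..<DIM('a)}. KN S (flat_sq \<nu>) (e p) (e q) (e p) (e q)) = lam p"
      using p by (simp add: n)
  qed
  ultimately show ?thesis by blast
qed

theorem proposition3p1:
  fixes S :: "'a::euclidean_space \<Rightarrow> 'a \<Rightarrow> real"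
    and W :: "'a set" and \<nu> :: 'a and m :: nat
  assumes "sym_bilinear S"
    and "subspace W" and "dim W = DIM('a) - 1"
    and "\<forall>w\<in>W. inner \<nu> w = 0" and "norm \<nu> = 1"
    and "1 \<le> m" and "m \<le> DIM('a) - 1"
  shows "m_positive_on m S W \<longleftrightarrow>
         KN S (flat_sq \<nu>) \<in> (top_of_set alg_curv) interior_of (cone_C m)"
proof -
  have W: "W = {x. \<nu> \<bullet> x = 0}" using assms(2-5) by (intro hyperplane_eq_if_orthogonal) auto
  have m: "1 \<le> m" "m < DIM('a)" using assms(6,7) by auto
  show ?thesis
  proof
    assume "m_positive_on m S W"
    then obtain lam where ev: "eigenvalues_on S W lam" and pos: "0 < (\<Sum>i<m. lam i)"
      unfolding m_positive_on_def by blast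
    show "KN S (flat_sq \<nu>) \<in> (top_of_set alg_curv) interior_of (cone_C m)"
      using KN_in_alg_curv[OF assms(1) sym_bilinear_flat_sq] pos
        cone_sum_KN_flat_sq_ge[OF assms(1) ev W assms(5) m]
      by (intro interior_cone_C_if_uniformly_positive) auto
  next
    assume interior: "KN S (flat_sq \<nu>) \<in> (top_of_set alg_curv) interior_of (cone_C m)"
    obtain lam where ev: "eigenvalues_on S W lam"
      using eigenvalues_on_exists[OF assms(1,2)] by blast
    then obtain e where e: "orthonormal_frame DIM('a) e"
        and eigen_sum: "cone_sum m e (KN S (flat_sq \<nu>)) = (\<Sum>i<m. lam i)"
      using cone_sum_KN_flat_sq_eigenframe[OF _ W assms(5) m(2)] by blast
    have "0 < cone_sum m e (KN S (flat_sq \<nu>))"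
      using cone_sum_pos_if_interior_cone_C[OF interior _ m(2) e] m(1) by simp
    then show "m_positive_on m S W"
      using ev eigen_sum unfolding m_positive_on_def by auto
  qed
qed

end
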